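(* Fix a TxnSP instance. Every representable subschedule is prime.
   Context: TxnSP instance: jobs $J=\{1,\dots,n\}$, identical machines $1,\dots,m$, lengths $L_\alpha>0$, symmetric binary conflict matrix $C$ with zero diagonal ($C_{\alpha\beta}=1$ iff $\alpha\neq\beta$ conflict). Insertion process: Start from some state, where each machine $\mu$ has a processing time $P_\mu$ (initially $0$ when empty). An instruction $(\alpha,\mu)$ appends a not-yet-placed job $\alpha$ at the end of machine $\mu$. It assigns $\alpha$ the start time $st(\alpha)$, defined as the least $t\ge P_\mu$ such that $[t,t+L_\alpha)$ is disjoint from $[st(\beta),ct(\beta))$ for every already placed job $\beta$ with $C_{\alpha\beta}=1$. It then sets the completion time $ct(\alpha)=st(\alpha)+L_\alpha$ and updates $P_\mu:=ct(\alpha)$. A subschedule formed by $S\subseteq J$ is the result of applying, from the empty state, a list of instructions whose jobs are exactly $S$. Its size is $|S|$, and its makespan $ms$ is $\max_\mu P_\mu$. A subschedule $j$ is derived from $i$ (and $i$ is a root of $j$) if there is an instruction list producing $i$ and a further list whose application after it produces $j$. $LJ_i$ is the set of last jobs on the nonempty machines of $i$. A subschedule $i$ is reducible by $\alpha\in LJ_i$ if removing $\alpha$ from the end of its machine and appending it to a different machine (with start time given by the insertion rule relative to the remaining jobs) yields a strictly smaller makespan. $i$ is non-reducible if it is reducible by no $\alpha\in LJ_i$. A non-reducible subschedule $i$ of size $c$ is prime if for every $d<c$ it has at least one non-reducible root of size $d$. Derivation rule: given a sequence $(\alpha_1,\dots,\alpha_c)$ of distinct jobs, insert them in this order, each into a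 machine with currently smallest processing time $P_\mu$, breaking ties by smallest machine index. A subschedule is representable if it is obtained by applying the derivation rule to some sequence of distinct jobs (a permutation of the subset forming it). *)

theory Defs
  imports Main "HOL.Real"
begin

text \<open>TxnSP instance: jobs J = {1..n}, machines {1..m}, lengths L, conflict relation C.
A (sub)schedule state records, for each machine, the list of jobs on it in order,
and the start time of every placed job (unplaced jobs keep the default value 0).\<close>

record sched =
  seqs :: "nat \<Rightarrow> nat list"
  st :: "nat \<Rightarrow> real"

definition empty_sched :: sched where
  "empty_sched = \<lparr>seqs = (\<lambda>_. []), st = (\<lambda>_. 0)\<rparr>"

definition placed :: "sched \<Rightarrow> nat set" where
  "placed s = (\<Union>\<mu>. set (seqs s \<mu>))"

definition ct :: "(nat \<Rightarrow> real) \<Rightarrow> sched \<Rightarrow> nat \<Rightarrow> real" where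
  "ct L s \<beta> = st s \<beta> + L \<beta>"

definition proc :: "(nat \<Rightarrow> real) \<Rightarrow> sched \<Rightarrow> nat \<Rightarrow> real" where
  "proc L s \<mu> = (if seqs s \<mu> = [] then 0 else ct L s (last (seqs s \<mu>)))"

definition ins_start :: "(nat \<Rightarrow> real) \<Rightarrow> (nat \<Rightarrow> nat \<Rightarrow> bool) \<Rightarrow> sched \<Rightarrow> nat \<Rightarrow> nat \<Rightarrow> real" where
  "ins_start L C s \<alpha> \<mu> = (LEAST t::real. proc L s \<mu> \<le> t \<and>
      (\<forall>\<beta>\<in>placed s. C \<alpha> \<beta> \<longrightarrow> {t..<t + L \<alpha>} \<inter> {st s \<beta>..<ct L s \<beta>} = {}))"

definition ins :: "(nat \<Rightarrow> real) \<Rightarrow> (nat \<Rightarrow> nat \<Rightarrow> bool) \<Rightarrow> sched \<Rightarrow> nat \<Rightarrow> nat \<Rightarrow> sched" where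
  "ins L C s \<alpha> \<mu> = \<lparr>seqs = (seqs s)(\<mu> := seqs s \<mu> @ [\<alpha>]),
                      st = (st s)(\<alpha> := ins_start L C s \<alpha> \<mu>)\<rparr>"

fun run :: "(nat \<Rightarrow> real) \<Rightarrow> (nat \<Rightarrow> nat \<Rightarrow> bool) \<Rightarrow> sched \<Rightarrow> (nat \<times> nat) list \<Rightarrow> sched" where
  "run L C s [] = s"
| "run L C s ((\<alpha>, \<mu>) # xs) = run L C (ins L C s \<alpha> \<mu>) xs"

fun valid :: "nat \<Rightarrow> nat \<Rightarrow> (nat \<Rightarrow> real) \<Rightarrow> (nat \<Rightarrow> nat \<Rightarrow> bool) \<Rightarrow> sched \<Rightarrow> (nat \<times> nat) list \<Rightarrow> bool" where
  "valid n m L C s [] = True"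
| "valid n m L C s ((\<alpha>, \<mu>) # xs) =
     (\<alpha> \<in> {1..n} \<and> \<alpha> \<notin> placed s \<and> \<mu> \<in> {1..m} \<and> valid n m L C (ins L C s \<alpha> \<mu>) xs)"

definition subsched :: "nat \<Rightarrow> nat \<Rightarrow> (nat \<Rightarrow> real) \<Rightarrow> (nat \<Rightarrow> nat \<Rightarrow> bool) \<Rightarrow> sched \<Rightarrow> bool" where
  "subsched n m L C s \<longleftrightarrow> (\<exists>xs. valid n m L C empty_sched xs \<and> s = run L C empty_sched xs)"

definition size_s :: "sched \<Rightarrow> nat" where
  "size_s s = card (placed s)"

definition ms :: "nat \<Rightarrow> (nat \<Rightarrow> real) \<Rightarrow> sched \<Rightarrow> real" where
  "ms m L s = Max (proc L s ` {1..m})"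

definition derived :: "nat \<Rightarrow> nat \<Rightarrow> (nat \<Rightarrow> real) \<Rightarrow> (nat \<Rightarrow> nat \<Rightarrow> bool) \<Rightarrow> sched \<Rightarrow> sched \<Rightarrow> bool" where
  "derived n m L C i j \<longleftrightarrow> subsched n m L C i \<and> (\<exists>ys. valid n m L C i ys \<and> j = run L C i ys)"

definition last_jobs :: "nat \<Rightarrow> sched \<Rightarrow> nat set" where
  "last_jobs m s = {last (seqs s \<mu>) | \<mu>. \<mu> \<in> {1..m} \<and> seqs s \<mu> \<noteq> []}"

definition remove_last :: "sched \<Rightarrow> nat \<Rightarrow> sched" where
  "remove_last s \<mu> = s\<lparr>seqs := (seqs s)(\<mu> := butlast (seqs s \<mu>))\<rparr>"

definition reducible_by :: "nat \<Rightarrow> (nat \<Rightarrow> real) \<Rightarrow> (nat \<Rightarrow> nat \<Rightarrow> bool) \<Rightarrow> sched \<Rightarrow> nat \<Rightarrow> bool" where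
  "reducible_by m L C s \<alpha> \<longleftrightarrow> (\<exists>\<mu>0 \<mu>. \<mu>0 \<in> {1..m} \<and> seqs s \<mu>0 \<noteq> [] \<and> last (seqs s \<mu>0) = \<alpha> \<and>
      \<mu> \<in> {1..m} \<and> \<mu> \<noteq> \<mu>0 \<and> ms m L (ins L C (remove_last s \<mu>0) \<alpha> \<mu>) < ms m L s)"

definition non_reducible :: "nat \<Rightarrow> (nat \<Rightarrow> real) \<Rightarrow> (nat \<Rightarrow> nat \<Rightarrow> bool) \<Rightarrow> sched \<Rightarrow> bool" where
  "non_reducible m L C s \<longleftrightarrow> (\<forall>\<alpha>\<in>last_jobs m s. \<not> reducible_by m L C s \<alpha>)"

definition prime_sched :: "nat \<Rightarrow> nat \<Rightarrow> (nat \<Rightarrow> real) \<Rightarrow> (nat \<Rightarrow> nat \<Rightarrow> bool) \<Rightarrow> sched \<Rightarrow> bool" where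
  "prime_sched n m L C s \<longleftrightarrow> non_reducible m L C s \<and>
     (\<forall>d < size_s s. \<exists>r. derived n m L C r s \<and> size_s r = d \<and> non_reducible m L C r)"

definition min_machine :: "nat \<Rightarrow> (nat \<Rightarrow> real) \<Rightarrow> sched \<Rightarrow> nat" where
  "min_machine m L s = (LEAST \<mu>. \<mu> \<in> {1..m} \<and> (\<forall>\<nu>\<in>{1..m}. proc L s \<mu> \<le> proc L s \<nu>))"

fun derive_run :: "nat \<Rightarrow> (nat \<Rightarrow> real) \<Rightarrow> (nat \<Rightarrow> nat \<Rightarrow> bool) \<Rightarrow> sched \<Rightarrow> nat list \<Rightarrow> sched" where
  "derive_run m L C s [] = s"
| "derive_run m L C s (\<alpha> # as) = derive_run m L C (ins L C s \<alpha> (min_machine m L s)) as"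

definition representable :: "nat \<Rightarrow> nat \<Rightarrow> (nat \<Rightarrow> real) \<Rightarrow> (nat \<Rightarrow> nat \<Rightarrow> bool) \<Rightarrow> sched \<Rightarrow> bool" where
  "representable n m L C s \<longleftrightarrow>
     (\<exists>as. distinct as \<and> set as \<subseteq> {1..n} \<and> s = derive_run m L C empty_sched as)"

end

theory Submission
  imports Defs "HOL-Analysis.Elementary_Metric_Spaces"
begin

text \<open>The derivation rule puts each job on a least-loaded machine, with the earliest conflict-free
start time with respect to the jobs placed so far. Later insertions only add jobs and raise
processing times. So if the last job \<alpha> of some machine is moved to another machine \<mu>, its new
start time is still feasible for the earlier, smaller schedule, on a machine that was no less
loaded than \<alpha>'s machine at the time \<alpha> was inserted. Hence \<alpha> does not start earlier, and
the makespan does not decrease. The same holds for every prefix of the derivation, and those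
prefixes are non-reducible roots of every size.\<close>

definition conflict_free ::
    "(nat \<Rightarrow> real) \<Rightarrow> (nat \<Rightarrow> nat \<Rightarrow> bool) \<Rightarrow> sched \<Rightarrow> nat \<Rightarrow> real \<Rightarrow> bool" where
  "conflict_free L C s \<alpha> t \<longleftrightarrow>
     (\<forall>\<beta>\<in>placed s. C \<alpha> \<beta> \<longrightarrow> {t..<t + L \<alpha>} \<inter> {st s \<beta>..<ct L s \<beta>} = {})"

definition sched_extends :: "sched \<Rightarrow> sched \<Rightarrow> bool" where
  "sched_extends s s1 \<longleftrightarrow> placed s1 \<subseteq> placed s \<and> (\<forall>\<beta>\<in>placed s1. st s \<beta> = st s1 \<beta>)"

lemma sched_extends_trans:
  "sched_extends s s1 \<Longrightarrow> sched_extends s1 s0 \<Longrightarrow> sched_extends s s0"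
  unfolding sched_extends_def by auto

lemma atLeastLessThan_disjoint_iff:
  fixes t a x y :: real
  shows "{t..<t + a} \<inter> {x..<y} = {} \<longleftrightarrow> a \<le> 0 \<or> y \<le> x \<or> y \<le> t \<or> t + a \<le> x"
proof
  assume disj: "{t..<t + a} \<inter> {x..<y} = {}"
  show "a \<le> 0 \<or> y \<le> x \<or> y \<le> t \<or> t + a \<le> x"
  proof (rule ccontr)
    assume "\<not> ?thesis"
    then have "max t x \<in> {t..<t + a} \<inter> {x..<y}" by auto
    with disj show False by blast
  qed
qed auto

lemma closed_atLeastLessThan_disjoint: "closed {t::real. {t..<t + a} \<inter> {x..<y} = {}}"
proof -
  have "{t::real. {t..<t + a} \<inter> {x..<y} = {}} =
        (if a \<le> 0 \<or> y \<le> x then UNIV else {y..} \<union> {..x - a})"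
    by (auto simp: atLeastLessThan_disjoint_iff)
  then show ?thesis by auto
qed

lemma closed_conflict_free: "closed {t. conflict_free L C s \<alpha> t}"
proof -
  have "{t. conflict_free L C s \<alpha> t} =
        (\<Inter>\<beta>\<in>{\<beta>\<in>placed s. C \<alpha> \<beta>}. {t. {t..<t + L \<alpha>} \<inter> {st s \<beta>..<ct L s \<beta>} = {}})"
    unfolding conflict_free_def by blast
  then show ?thesis using closed_atLeastLessThan_disjoint by (simp only:) (rule closed_INT, blast)
qed

lemma conflict_free_if_after_all:
  "\<forall>\<beta>\<in>placed s. ct L s \<beta> \<le> t \<Longrightarrow> conflict_free L C s \<alpha> t"
  unfolding conflict_free_def atLeastLessThan_disjoint_iff by fastforce

lemma conflict_free_sched_extends:
  "sched_extends s s1 \<Longrightarrow> conflict_free L C s \<alpha> t \<Longrightarrow> conflict_free L C s1 \<alpha> t"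
  unfolding sched_extends_def conflict_free_def ct_def by fastforce

lemma Least_eq_Inf_closed:
  fixes S :: "real set"
  assumes "closed S" "S \<noteq> {}" "bdd_below S"
  shows "(LEAST t. t \<in> S) = Inf S"
  by (rule Least_equality) (use assms closed_contains_Inf cInf_lower in auto)

text \<open>LEAST on the reals is junk unless a least element exists; here it does, because the
feasible start times form a closed, nonempty set bounded below.\<close>
lemma ins_start_least:
  assumes "finite (placed s)"
  shows ins_start_ge_proc: "proc L s \<mu> \<le> ins_start L C s \<alpha> \<mu>"
    and conflict_free_ins_start: "conflict_free L C s \<alpha> (ins_start L C s \<alpha> \<mu>)"
    and ins_start_le: "\<lbrakk>proc L s \<mu> \<le> t; conflict_free L C s \<alpha> t\<rbrakk> \<Longrightarrow> ins_start L C s \<alpha> \<mu> \<le> t"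
proof -
  define S where "S = {t. proc L s \<mu> \<le> t \<and> conflict_free L C s \<alpha> t}"
  have "closed S"
  proof -
    have "S = {proc L s \<mu>..} \<inter> {t. conflict_free L C s \<alpha> t}" unfolding S_def by auto
    then show ?thesis by (simp add: closed_Int closed_conflict_free)
  qed
  moreover have "Max (insert (proc L s \<mu>) (ct L s ` placed s)) \<in> S"
    unfolding S_def using assms by (auto intro: conflict_free_if_after_all)
  then have "S \<noteq> {}" by blast
  moreover have "bdd_below S" unfolding S_def by (rule bdd_belowI) auto
  moreover have "ins_start L C s \<alpha> \<mu> = (LEAST t. t \<in> S)"
    unfolding ins_start_def S_def conflict_free_def by simp
  ultimately have "ins_start L C s \<alpha> \<mu> \<in> S" "\<forall>t\<in>S. ins_start L C s \<alpha> \<mu> \<le> t"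
    using Least_eq_Inf_closed closed_contains_Inf cInf_lower by auto
  then show "proc L s \<mu> \<le> ins_start L C s \<alpha> \<mu>" "conflict_free L C s \<alpha> (ins_start L C s \<alpha> \<mu>)"
    and "\<lbrakk>proc L s \<mu> \<le> t; conflict_free L C s \<alpha> t\<rbrakk> \<Longrightarrow> ins_start L C s \<alpha> \<mu> \<le> t"
    unfolding S_def by auto
qed

lemma ins_start_mono:
  assumes "finite (placed s)" "sched_extends s s1" "proc L s1 \<nu> \<le> proc L s \<mu>"
  shows "ins_start L C s1 \<alpha> \<nu> \<le> ins_start L C s \<alpha> \<mu>"
proof (rule ins_start_le)
  show "finite (placed s1)"
    using assms(1,2) finite_subset unfolding sched_extends_def by blast
  show "proc L s1 \<nu> \<le> ins_start L C s \<alpha> \<mu>"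
    using assms(3) ins_start_ge_proc[OF assms(1)] by (rule order_trans)
  show "conflict_free L C s1 \<alpha> (ins_start L C s \<alpha> \<mu>)"
    using assms(2) conflict_free_ins_start[OF assms(1)] by (rule conflict_free_sched_extends)
qed

lemma placed_ins [simp]: "placed (ins L C s \<alpha> \<mu>) = insert \<alpha> (placed s)"
  unfolding placed_def ins_def by (auto split: if_splits)

lemma seqs_ins [simp]: "seqs (ins L C s \<alpha> \<mu>) = (seqs s)(\<mu> := seqs s \<mu> @ [\<alpha>])"
  by (simp add: ins_def)

lemma st_ins [simp]: "st (ins L C s \<alpha> \<mu>) = (st s)(\<alpha> := ins_start L C s \<alpha> \<mu>)"
  by (simp add: ins_def)

lemma placed_empty_sched [simp]: "placed empty_sched = {}"
  by (simp add: placed_def empty_sched_def)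

lemma last_in_placed: "seqs s \<nu> \<noteq> [] \<Longrightarrow> last (seqs s \<nu>) \<in> placed s"
  unfolding placed_def using last_in_set by blast

lemma proc_ins_same: "proc L (ins L C s \<alpha> \<mu>) \<mu> = ins_start L C s \<alpha> \<mu> + L \<alpha>"
  by (simp add: proc_def ct_def)

lemma proc_le_if_st_le:
  "seqs s \<nu> = seqs s' \<nu> \<Longrightarrow> \<forall>\<beta>. st s \<beta> \<le> st s' \<beta> \<Longrightarrow> proc L s \<nu> \<le> proc L s' \<nu>"
  by (simp add: proc_def ct_def)

lemma sched_extends_ins: "\<alpha> \<notin> placed s \<Longrightarrow> sched_extends (ins L C s \<alpha> \<mu>) s"
  unfolding sched_extends_def by auto

lemma proc_ins_mono:
  assumes "finite (placed s)" "\<alpha> \<notin> placed s" "0 \<le> L \<alpha>"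
  shows "proc L s \<nu> \<le> proc L (ins L C s \<alpha> \<mu>) \<nu>"
proof (cases "\<nu> = \<mu>")
  case True
  then show ?thesis
    using ins_start_ge_proc[OF assms(1)] assms(3) by (simp add: proc_ins_same add_increasing2)
next
  case False
  have "seqs s \<nu> \<noteq> [] \<Longrightarrow> last (seqs s \<nu>) \<noteq> \<alpha>" using last_in_placed assms(2) by metis
  with False show ?thesis by (simp add: proc_def ct_def)
qed

lemma min_machine:
  assumes "m \<ge> 1"
  shows "min_machine m L s \<in> {1..m}" "\<nu> \<in> {1..m} \<Longrightarrow> proc L s (min_machine m L s) \<le> proc L s \<nu>"
proof -
  have "Min (proc L s ` {1..m}) \<in> proc L s ` {1..m}" using assms by (intro Min_in) auto
  then obtain \<mu> where "\<mu> \<in> {1..m}" "proc L s \<mu> = Min (proc L s ` {1..m})" by auto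
  then have "\<mu> \<in> {1..m} \<and> (\<forall>\<nu>\<in>{1..m}. proc L s \<mu> \<le> proc L s \<nu>)" by auto
  then have "min_machine m L s \<in> {1..m} \<and> (\<forall>\<nu>\<in>{1..m}. proc L s (min_machine m L s) \<le> proc L s \<nu>)"
    unfolding min_machine_def by (rule LeastI)
  then show "min_machine m L s \<in> {1..m}" "\<nu> \<in> {1..m} \<Longrightarrow> proc L s (min_machine m L s) \<le> proc L s \<nu>"
    by auto
qed

text \<open>The witness s1 is the schedule into which the last job of \<nu> was inserted, at a moment
when \<nu> was a least-loaded machine; processing times have only grown since.\<close>
definition greedy_last_job ::
    "nat \<Rightarrow> (nat \<Rightarrow> real) \<Rightarrow> (nat \<Rightarrow> nat \<Rightarrow> bool) \<Rightarrow> sched \<Rightarrow> nat \<Rightarrow> bool" where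
  "greedy_last_job m L C s \<nu> \<longleftrightarrow> (\<exists>s1. sched_extends s s1 \<and> last (seqs s \<nu>) \<notin> placed s1 \<and>
     (\<forall>\<mu>\<in>{1..m}. proc L s1 \<nu> \<le> proc L s \<mu>) \<and>
     st s (last (seqs s \<nu>)) = ins_start L C s1 (last (seqs s \<nu>)) \<nu>)"

definition greedy_sched :: "nat \<Rightarrow> (nat \<Rightarrow> real) \<Rightarrow> (nat \<Rightarrow> nat \<Rightarrow> bool) \<Rightarrow> sched \<Rightarrow> bool" where
  "greedy_sched m L C s \<longleftrightarrow> finite (placed s) \<and> (\<forall>\<nu>. seqs s \<nu> \<noteq> [] \<longrightarrow> greedy_last_job m L C s \<nu>)"

lemma greedy_sched_empty: "greedy_sched m L C empty_sched"
  by (simp add: greedy_sched_def placed_def empty_sched_def)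

lemma greedy_last_job_ins_min_machine:
  assumes "m \<ge> 1" "finite (placed s)" "\<alpha> \<notin> placed s" "0 \<le> L \<alpha>"
  shows "greedy_last_job m L C (ins L C s \<alpha> (min_machine m L s)) (min_machine m L s)"
  unfolding greedy_last_job_def
proof (intro exI conjI)
  let ?s' = "ins L C s \<alpha> (min_machine m L s)"
  show "sched_extends ?s' s" using assms(3) by (rule sched_extends_ins)
  show "\<forall>\<mu>\<in>{1..m}. proc L s (min_machine m L s) \<le> proc L ?s' \<mu>"
    using min_machine(2)[OF assms(1)] proc_ins_mono[where L=L, OF assms(2-4)] order_trans by blast
qed (use assms(3) in simp_all)

lemma greedy_last_job_ins_other:
  assumes "greedy_last_job m L C s \<nu>" "\<nu> \<noteq> \<mu>" "seqs s \<nu> \<noteq> []"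
    and "finite (placed s)" "\<alpha> \<notin> placed s" "0 \<le> L \<alpha>"
  shows "greedy_last_job m L C (ins L C s \<alpha> \<mu>) \<nu>"
proof -
  let ?s' = "ins L C s \<alpha> \<mu>"
  obtain s1 where s1: "sched_extends s s1" "last (seqs s \<nu>) \<notin> placed s1"
    "\<forall>\<mu>'\<in>{1..m}. proc L s1 \<nu> \<le> proc L s \<mu>'"
    "st s (last (seqs s \<nu>)) = ins_start L C s1 (last (seqs s \<nu>)) \<nu>"
    using assms(1) unfolding greedy_last_job_def by blast
  have "sched_extends ?s' s1" using sched_extends_ins[OF assms(5)] s1(1) by (rule sched_extends_trans)
  moreover have "\<forall>\<mu>'\<in>{1..m}. proc L s1 \<nu> \<le> proc L ?s' \<mu>'"
    using s1(3) proc_ins_mono[where L=L, OF assms(4-6)] order_trans by blast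
  moreover have "last (seqs s \<nu>) \<noteq> \<alpha>" using last_in_placed[OF assms(3)] assms(5) by metis
  ultimately show ?thesis
    unfolding greedy_last_job_def using assms(2) s1(2,4) by (intro exI[of _ s1]) simp
qed

lemma greedy_sched_ins_min_machine:
  assumes "greedy_sched m L C s" "m \<ge> 1" "\<alpha> \<notin> placed s" "0 \<le> L \<alpha>"
  shows "greedy_sched m L C (ins L C s \<alpha> (min_machine m L s))"
  unfolding greedy_sched_def
proof (intro conjI allI impI)
  have fin: "finite (placed s)" using assms(1) by (simp add: greedy_sched_def)
  then show "finite (placed (ins L C s \<alpha> (min_machine m L s)))" by simp
  fix \<nu> assume ne: "seqs (ins L C s \<alpha> (min_machine m L s)) \<nu> \<noteq> []"
  show "greedy_last_job m L C (ins L C s \<alpha> (min_machine m L s)) \<nu>"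
  proof (cases "\<nu> = min_machine m L s")
    case True
    then show ?thesis using greedy_last_job_ins_min_machine[where L=L, OF assms(2) fin assms(3,4)] by simp
  next
    case False
    then show ?thesis using ne assms(1) greedy_last_job_ins_other[where L=L, OF _ False _ fin assms(3,4)]
      by (simp add: greedy_sched_def)
  qed
qed

lemma st_remove_last [simp]: "st (remove_last s \<mu>0) = st s"
  by (simp add: remove_last_def)

lemma seqs_remove_last [simp]: "seqs (remove_last s \<mu>0) = (seqs s)(\<mu>0 := butlast (seqs s \<mu>0))"
  by (simp add: remove_last_def)

lemma set_subset_insert_last_butlast: "set xs \<subseteq> insert (last xs) (set (butlast xs))"
  by (cases xs rule: rev_cases) auto

lemma placed_remove_last_subset: "placed (remove_last s \<mu>0) \<subseteq> placed s"
  unfolding placed_def by (fastforce dest: in_set_butlastD split: if_splits)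

lemma finite_placed_remove_last: "finite (placed s) \<Longrightarrow> finite (placed (remove_last s \<mu>0))"
  using placed_remove_last_subset by (rule finite_subset)

lemma placed_diff_last_subset: "placed s - {last (seqs s \<mu>0)} \<subseteq> placed (remove_last s \<mu>0)"
proof
  fix x assume "x \<in> placed s - {last (seqs s \<mu>0)}"
  then obtain \<nu> where "x \<in> set (seqs s \<nu>)" "x \<noteq> last (seqs s \<mu>0)" unfolding placed_def by blast
  then have "x \<in> set (seqs (remove_last s \<mu>0) \<nu>)"
    using set_subset_insert_last_butlast[of "seqs s \<mu>0"] by (cases "\<nu> = \<mu>0") auto
  then show "x \<in> placed (remove_last s \<mu>0)" unfolding placed_def by blast
qed

lemma proc_remove_last_other: "\<nu> \<noteq> \<mu>0 \<Longrightarrow> proc L (remove_last s \<mu>0) \<nu> = proc L s \<nu>"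
  by (simp add: proc_def ct_def)

text \<open>This is where greediness is used: the reinsertion start time is conflict-free already for
the schedule into which \<alpha> was originally inserted.\<close>
lemma st_le_reinsert_start:
  assumes "greedy_sched m L C s" "seqs s \<mu>0 \<noteq> []" "last (seqs s \<mu>0) = \<alpha>"
    and "\<mu> \<in> {1..m}" "\<mu> \<noteq> \<mu>0"
  shows "st s \<alpha> \<le> ins_start L C (remove_last s \<mu>0) \<alpha> \<mu>"
proof -
  let ?r = "remove_last s \<mu>0"
  obtain s1 where s1: "sched_extends s s1" "\<alpha> \<notin> placed s1"
    "\<forall>\<mu>'\<in>{1..m}. proc L s1 \<mu>0 \<le> proc L s \<mu>'" "st s \<alpha> = ins_start L C s1 \<alpha> \<mu>0"
    using assms(1-3) unfolding greedy_sched_def greedy_last_job_def by blast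
  have "finite (placed ?r)"
    using assms(1) by (simp add: greedy_sched_def finite_placed_remove_last)
  moreover have "sched_extends ?r s1"
    using s1(1,2) placed_diff_last_subset[of s \<mu>0] assms(3) unfolding sched_extends_def by auto
  moreover have "proc L s1 \<mu>0 \<le> proc L ?r \<mu>"
    using s1(3) assms(4,5) by (simp add: proc_remove_last_other)
  ultimately show ?thesis unfolding s1(4) by (rule ins_start_mono)
qed

lemma ms_le_ms:
  assumes "\<forall>\<nu>\<in>{1..m}. \<exists>\<nu>'\<in>{1..m}. proc L s \<nu> \<le> proc L s' \<nu>'"
  shows "ms m L s \<le> ms m L s'"
proof (cases "m = 0")
  case False
  show ?thesis unfolding ms_def
  proof (rule Max.boundedI)
    show "finite (proc L s ` {1..m})" "proc L s ` {1..m} \<noteq> {}" using False by auto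
    fix p assume "p \<in> proc L s ` {1..m}"
    then obtain \<nu>' where "\<nu>' \<in> {1..m}" "p \<le> proc L s' \<nu>'" using assms by blast
    moreover have "proc L s' \<nu>' \<le> Max (proc L s' ` {1..m})" using \<open>\<nu>' \<in> {1..m}\<close> by simp
    ultimately show "p \<le> Max (proc L s' ` {1..m})" by linarith
  qed
qed (simp add: ms_def)

lemma ms_le_ms_reinsert:
  assumes "greedy_sched m L C s" "\<mu>0 \<in> {1..m}" "seqs s \<mu>0 \<noteq> []" "last (seqs s \<mu>0) = \<alpha>"
    and "\<mu> \<in> {1..m}" "\<mu> \<noteq> \<mu>0" "0 \<le> L \<alpha>"
  shows "ms m L s \<le> ms m L (ins L C (remove_last s \<mu>0) \<alpha> \<mu>)"
proof (rule ms_le_ms, intro ballI)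
  let ?r = "remove_last s \<mu>0"
  let ?s' = "ins L C ?r \<alpha> \<mu>"
  let ?t = "ins_start L C ?r \<alpha> \<mu>"
  have st_le: "st s \<alpha> \<le> ?t" using st_le_reinsert_start assms(1,3-6) .
  have fin: "finite (placed ?r)"
    using assms(1) by (simp add: greedy_sched_def finite_placed_remove_last)
  have "proc L s \<mu> = proc L ?r \<mu>" using assms(6) by (simp add: proc_remove_last_other)
  also have "\<dots> \<le> ?t" by (rule ins_start_ge_proc[OF fin])
  finally have proc_\<mu>: "proc L s \<mu> \<le> proc L ?s' \<mu>" using assms(7) by (simp add: proc_ins_same)
  have proc_\<mu>0: "proc L s \<mu>0 \<le> proc L ?s' \<mu>"
    using assms(3,4) st_le by (simp add: proc_ins_same proc_def ct_def)
  fix \<nu> assume \<nu>: "\<nu> \<in> {1..m}"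
  show "\<exists>\<nu>'\<in>{1..m}. proc L s \<nu> \<le> proc L ?s' \<nu>'"
  proof (cases "\<nu> = \<mu>0 \<or> \<nu> = \<mu>")
    case True
    then show ?thesis using proc_\<mu> proc_\<mu>0 assms(5) by auto
  next
    case False
    then have "proc L s \<nu> \<le> proc L ?s' \<nu>" using st_le by (intro proc_le_if_st_le) auto
    then show ?thesis using \<nu> by blast
  qed
qed

lemma greedy_sched_non_reducible:
  assumes "greedy_sched m L C s" "\<forall>\<alpha>\<in>placed s. 0 \<le> L \<alpha>"
  shows "non_reducible m L C s"
  unfolding non_reducible_def
proof (intro ballI notI)
  fix \<alpha> assume "\<alpha> \<in> last_jobs m s" "reducible_by m L C s \<alpha>"
  then obtain \<mu>0 \<mu> where \<mu>0: "\<mu>0 \<in> {1..m}" "seqs s \<mu>0 \<noteq> []" "last (seqs s \<mu>0) = \<alpha>"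
    and \<mu>: "\<mu> \<in> {1..m}" "\<mu> \<noteq> \<mu>0"
    and smaller: "ms m L (ins L C (remove_last s \<mu>0) \<alpha> \<mu>) < ms m L s"
    unfolding reducible_by_def by blast
  have "0 \<le> L \<alpha>" using assms(2) last_in_placed[OF \<mu>0(2)] \<mu>0(3) by blast
  with assms(1) \<mu>0 \<mu> have "ms m L s \<le> ms m L (ins L C (remove_last s \<mu>0) \<alpha> \<mu>)"
    by (rule ms_le_ms_reinsert)
  with smaller show False by simp
qed

lemma derive_run_append:
  "derive_run m L C s (xs @ ys) = derive_run m L C (derive_run m L C s xs) ys"
  by (induction xs arbitrary: s) auto

lemma placed_derive_run: "placed (derive_run m L C s as) = placed s \<union> set as"
  by (induction as arbitrary: s) auto

lemma greedy_sched_derive_run: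
  assumes "greedy_sched m L C s" "m \<ge> 1" "distinct as" "set as \<inter> placed s = {}"
    and "\<forall>\<alpha>\<in>set as. 0 \<le> L \<alpha>"
  shows "greedy_sched m L C (derive_run m L C s as)"
  using assms
proof (induction as arbitrary: s)
  case (Cons \<alpha> as)
  have "greedy_sched m L C (ins L C s \<alpha> (min_machine m L s))"
    using Cons.prems by (intro greedy_sched_ins_min_machine) auto
  from Cons.IH[OF this] Cons.prems show ?case by simp
qed simp

lemma derive_run_eq_run:
  assumes "m \<ge> 1" "set as \<subseteq> {1..n}" "distinct as" "set as \<inter> placed s = {}"
  shows "\<exists>ys. valid n m L C s ys \<and> derive_run m L C s as = run L C s ys"
  using assms
proof (induction as arbitrary: s)
  case Nil
  show ?case by (rule exI[of _ "[]"]) simp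
next
  case (Cons \<alpha> as)
  let ?\<mu> = "min_machine m L s"
  obtain ys where "valid n m L C (ins L C s \<alpha> ?\<mu>) ys"
    "derive_run m L C (ins L C s \<alpha> ?\<mu>) as = run L C (ins L C s \<alpha> ?\<mu>) ys"
    using Cons.IH[of "ins L C s \<alpha> ?\<mu>"] Cons.prems by auto
  then show ?case using Cons.prems min_machine(1)[OF Cons.prems(1)]
    by (intro exI[of _ "(\<alpha>, ?\<mu>) # ys"]) simp
qed

lemma derived_derive_run_prefix:
  assumes "m \<ge> 1" "distinct (xs @ ys)" "set (xs @ ys) \<subseteq> {1..n}"
  shows "derived n m L C (derive_run m L C empty_sched xs) (derive_run m L C empty_sched (xs @ ys))"
proof -
  let ?r = "derive_run m L C empty_sched xs"
  have "\<exists>zs. valid n m L C empty_sched zs \<and> ?r = run L C empty_sched zs"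
    using assms by (intro derive_run_eq_run) auto
  moreover have "\<exists>zs. valid n m L C ?r zs \<and> derive_run m L C ?r ys = run L C ?r zs"
    using assms by (intro derive_run_eq_run) (auto simp: placed_derive_run)
  ultimately show ?thesis unfolding derived_def subsched_def derive_run_append by auto
qed

lemma non_reducible_derive_run:
  assumes "m \<ge> 1" "distinct as" "\<forall>\<alpha>\<in>set as. 0 \<le> L \<alpha>"
  shows "non_reducible m L C (derive_run m L C empty_sched as)"
  using assms
  by (intro greedy_sched_non_reducible greedy_sched_derive_run greedy_sched_empty)
    (auto simp: placed_derive_run)

theorem lemma6:
  fixes n m :: nat and L :: "nat \<Rightarrow> real" and C :: "nat \<Rightarrow> nat \<Rightarrow> bool" and s :: sched
  assumes "m \<ge> 1"
    and "\<forall>\<alpha>\<in>{1..n}. L \<alpha> > 0"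
    and "\<forall>\<alpha> \<beta>. C \<alpha> \<beta> = C \<beta> \<alpha>"
    and "\<forall>\<alpha>. \<not> C \<alpha> \<alpha>"
    and "representable n m L C s"
  shows "prime_sched n m L C s"
proof -
  obtain as where as: "distinct as" "set as \<subseteq> {1..n}" "s = derive_run m L C empty_sched as"
    using assms(5) unfolding representable_def by blast
  have L_nonneg: "\<forall>\<alpha>\<in>set as. 0 \<le> L \<alpha>"
  proof
    fix \<alpha> assume "\<alpha> \<in> set as"
    then have "0 < L \<alpha>" using as(2) assms(2) by blast
    then show "0 \<le> L \<alpha>" by simp
  qed
  have size_s: "size_s (derive_run m L C empty_sched xs) = length xs" if "distinct xs" for xs
    using that by (simp add: size_s_def placed_derive_run distinct_card)
  have "\<exists>r. derived n m L C r s \<and> size_s r = d \<and> non_reducible m L C r" if "d < size_s s" for d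
  proof (intro exI conjI)
    let ?r = "derive_run m L C empty_sched (take d as)"
    show "derived n m L C ?r s"
      using derived_derive_run_prefix[OF assms(1), of "take d as" "drop d as"] as by simp
    show "size_s ?r = d" using that as(1,3) size_s by simp
    show "non_reducible m L C ?r"
      using as(1) L_nonneg by (intro non_reducible_derive_run assms(1)) (auto dest: in_set_takeD)
  qed
  moreover have "non_reducible m L C s"
    unfolding as(3) using assms(1) as(1) L_nonneg by (rule non_reducible_derive_run)
  ultimately show ?thesis unfolding prime_sched_def by blast
qed

end
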